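(* Let $(\mathbf{x}^*,\boldsymbol{\lambda}^* )$ be a saddle point of the problem, i.e. $\mathcal{A}(\mathbf{x}^* )=\mathbf{b}$ and $-\mathcal{A}^T(\boldsymbol{\lambda}^* )\in\partial f(\mathbf{x}^* )$, and let $\{\mathbf{x}^k,\mathbf{z}^k,\boldsymbol{\lambda}^k\}$ be generated by the Fast PALM algorithm. Then for every $K>0$, $$f(\mathbf{x}^{K+1})-f(\mathbf{x}^* )+\langle\boldsymbol{\lambda}^*,\mathcal{A}(\mathbf{x}^{K+1})-\mathbf{b}\rangle+\frac12\|\mathcal{A}(\mathbf{x}^{K+1})-\mathbf{b}\|^2\le\frac{2}{(K+2)^2}\Bigl(L\|\mathbf{z}^0-\mathbf{x}^*\|^2+\|\boldsymbol{\lambda}^0-\boldsymbol{\lambda}^*\|^2\Bigr).$$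
   Context: Setting: finite-dimensional real inner product spaces with induced norms $\|\cdot\|$. Problem: $\min_{\mathbf{x}} f(\mathbf{x})=g(\mathbf{x})+h(\mathbf{x})$ subject to $\mathcal{A}(\mathbf{x})=\mathbf{b}$, where $g,h$ are proper convex lower semicontinuous, $g$ is differentiable with $L$-Lipschitz gradient ($L>0$), $\mathcal{A}$ is linear with adjoint $\mathcal{A}^T$. Fast PALM: given $\mathbf{x}^0,\mathbf{z}^0,\boldsymbol{\lambda}^0$ and $\theta^{(0)}=\beta^{(0)}=1$, for $k=0,1,2,\dots$: $\mathbf{y}^{k+1}=(1-\theta^{(k)})\mathbf{x}^k+\theta^{(k)}\mathbf{z}^k$; $\mathbf{z}^{k+1}=\arg\min_{\mathbf{x}}\ \langle\nabla g(\mathbf{y}^{k+1}),\mathbf{x}\rangle+h(\mathbf{x})+\langle\boldsymbol{\lambda}^k,\mathcal{A}(\mathbf{x})\rangle+\frac{\beta^{(k)}}{2}\|\mathcal{A}(\mathbf{x})-\mathbf{b}\|^2+\frac{L\theta^{(k)}}{2}\|\mathbf{x}-\mathbf{z}^k\|^2$; $\mathbf{x}^{k+1}=(1-\theta^{(k)})\mathbf{x}^k+\theta^{(k)}\mathbf{z}^{k+1}$; $\boldsymbol{\lambda}^{k+1}=\boldsymbol{\lambda}^k+\beta^{(k)}(\mathcal{A}(\mathbf{z}^{k+1})-\mathbf{b})$; $\theta^{(k+1)}=\frac{-(\theta^{(k)})^2+\sqrt{(\theta^{(k)})^4+4(\theta^{(k)})^2}}{2}$; $\beta^{(k+1)}=1/\theta^{(k+1)}$.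 (In the paper the right-hand side is written $\frac{2}{(K+2)^2}(LD_{\mathbf{x}^*}^2+D_{\boldsymbol{\lambda}^*}^2)$, with the initialization $\mathbf{z}^0=\mathbf{x}^0$ implicitly making $D_{\mathbf{x}^*}=\|\mathbf{x}^0-\mathbf{x}^*\|=\|\mathbf{z}^0-\mathbf{x}^*\|$ and $D_{\boldsymbol{\lambda}^*}=\|\boldsymbol{\lambda}^0-\boldsymbol{\lambda}^*\|$.) *)

theory Defs
  imports "HOL-Analysis.Analysis" "HOL-Library.Extended_Real"
begin

definition proper_fun :: "('a \<Rightarrow> ereal) \<Rightarrow> bool" where
  "proper_fun h \<longleftrightarrow> (\<forall>x. h x \<noteq> -\<infinity>) \<and> (\<exists>x. h x \<noteq> \<infinity>)"

definition convex_fun :: "('a::real_vector \<Rightarrow> ereal) \<Rightarrow> bool" where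
  "convex_fun h \<longleftrightarrow> (\<forall>x y t. 0 \<le> t \<and> t \<le> 1 \<longrightarrow>
      h ((1 - t) *\<^sub>R x + t *\<^sub>R y) \<le> ereal (1 - t) * h x + ereal t * h y)"

definition lsc_fun :: "('a::topological_space \<Rightarrow> ereal) \<Rightarrow> bool" where
  "lsc_fun h \<longleftrightarrow> (\<forall>x. h x \<le> Liminf (at x) h)"

definition subdiff :: "('a::real_inner \<Rightarrow> ereal) \<Rightarrow> 'a \<Rightarrow> 'a set" where
  "subdiff f x = {s. \<forall>y. f x + ereal (s \<bullet> (y - x)) \<le> f y}"

end

theory Submission
  imports Defs
begin

text \<open>With \<open>\<Phi>\<^sub>k\<close> the Lagrangian gap of \<open>x\<^sub>k\<close> plus half its squared residual and
  \<open>D\<^sub>k = L \<parallel>z\<^sub>k - x\<^sup>*\<parallel>\<^sup>2 + \<parallel>\<lambda>\<^sub>k - \<lambda>\<^sup>*\<parallel>\<^sup>2\<close>, one iteration gives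
  \<open>\<Phi>\<^sub>k\<^sub>+\<^sub>1 \<le> (1 - \<theta>\<^sub>k) \<Phi>\<^sub>k + \<theta>\<^sub>k\<^sup>2/2 (D\<^sub>k - D\<^sub>k\<^sub>+\<^sub>1)\<close>. This combines the descent lemma and
  the gradient inequality for \<open>g\<close> at the extrapolated point, convexity of \<open>h\<close> and of the squared
  residual along \<open>x\<^sub>k\<^sub>+\<^sub>1 = (1 - \<theta>\<^sub>k) x\<^sub>k + \<theta>\<^sub>k z\<^sub>k\<^sub>+\<^sub>1\<close>, and the three-point inequality of
  the strongly convex subproblem defining \<open>z\<^sub>k\<^sub>+\<^sub>1\<close>; the choice \<open>\<beta>\<^sub>k = 1/\<theta>\<^sub>k\<close> makes the
  multiplier update absorb the dual cross terms. Since \<open>\<theta>\<^sub>k\<^sub>+\<^sub>1\<^sup>2 = (1 - \<theta>\<^sub>k\<^sub>+\<^sub>1) \<theta>\<^sub>k\<^sup>2\<close>,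
  dividing by \<open>\<theta>\<^sub>k\<^sup>2\<close> telescopes to \<open>\<Phi>\<^sub>K\<^sub>+\<^sub>1 \<le> \<theta>\<^sub>K\<^sup>2 D\<^sub>0 / 2\<close>, and
  \<open>1/\<theta>\<^sub>k\<^sub>+\<^sub>1 \<ge> 1/\<theta>\<^sub>k + 1/2\<close> gives \<open>\<theta>\<^sub>K \<le> 2/(K + 2)\<close>.\<close>

lemma has_real_derivative_along_line:
  fixes g :: "'a::real_inner \<Rightarrow> real"
  assumes "\<And>u. (g has_derivative (\<lambda>v. G u \<bullet> v)) (at u)"
  shows "((\<lambda>t. g (y + t *\<^sub>R d)) has_real_derivative G (y + t *\<^sub>R d) \<bullet> d) (at t within S)"
proof -
  have "((\<lambda>t. y + t *\<^sub>R d) has_derivative (\<lambda>s. s *\<^sub>R d)) (at t within S)"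
    by (auto intro!: derivative_eq_intros)
  from has_derivative_compose[OF this assms]
  show ?thesis unfolding has_field_derivative_def
    by (rule has_derivative_eq_rhs) (simp add: fun_eq_iff mult.commute)
qed

lemma convex_gradient_inequality:
  fixes g :: "'a::real_inner \<Rightarrow> real"
  assumes g_convex: "convex_on UNIV g"
    and g_grad: "\<And>u. (g has_derivative (\<lambda>v. G u \<bullet> v)) (at u)"
  shows "g y + G y \<bullet> (x - y) \<le> g x"
proof -
  define d where "d = x - y"
  have "convex_on UNIV (\<lambda>t::real. g (y + t *\<^sub>R d))"
  proof (rule convex_onI)
    fix t a c :: real
    assume "0 < t" "t < 1"
    have "y + ((1 - t) * a + t * c) *\<^sub>R d = (1 - t) *\<^sub>R (y + a *\<^sub>R d) + t *\<^sub>R (y + c *\<^sub>R d)"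
      by (simp add: algebra_simps)
    then show "g (y + ((1 - t) *\<^sub>R a + t *\<^sub>R c) *\<^sub>R d) \<le> (1 - t) * g (y + a *\<^sub>R d) + t * g (y + c *\<^sub>R d)"
      using convex_onD[OF g_convex, of t] \<open>0 < t\<close> \<open>t < 1\<close> by simp
  qed simp
  then have "G y \<bullet> d * (1 - 0) \<le> g (y + 1 *\<^sub>R d) - g (y + 0 *\<^sub>R d)"
    by (rule convex_on_imp_above_tangent)
       (use has_real_derivative_along_line[OF g_grad, of y d 0 UNIV] in auto)
  then show ?thesis by (simp add: d_def)
qed

lemma lipschitz_gradient_upper_bound:
  fixes g :: "'a::real_inner \<Rightarrow> real"
  assumes g_grad: "\<And>u. (g has_derivative (\<lambda>v. G u \<bullet> v)) (at u)"
    and G_lip: "\<And>u v. norm (G u - G v) \<le> L * norm (u - v)"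
  shows "g x \<le> g y + G y \<bullet> (x - y) + L / 2 * (norm (x - y))\<^sup>2"
proof -
  define d where "d = x - y"
  define \<phi> where "\<phi> t = g (y + t *\<^sub>R d) - t * (G y \<bullet> d) - L / 2 * t\<^sup>2 * (norm d)\<^sup>2" for t
  have "\<phi> 1 \<le> \<phi> 0"
  proof (rule DERIV_nonpos_imp_nonincreasing[of 0 1])
    fix t :: real
    assume t: "0 \<le> t" "t \<le> 1"
    have D: "(\<phi> has_real_derivative (G (y + t *\<^sub>R d) - G y) \<bullet> d - L * t * (norm d)\<^sup>2) (at t)"
      unfolding \<phi>_def inner_diff_left
      by (rule derivative_eq_intros has_real_derivative_along_line[OF g_grad] | simp)+
    have "(G (y + t *\<^sub>R d) - G y) \<bullet> d \<le> norm (G (y + t *\<^sub>R d) - G y) * norm d"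
      by (rule norm_cauchy_schwarz)
    also have "\<dots> \<le> L * norm (t *\<^sub>R d) * norm d"
      using G_lip[of "y + t *\<^sub>R d" y] by (intro mult_right_mono) auto
    also have "\<dots> = L * t * (norm d)\<^sup>2"
      using t by (simp add: power2_eq_square)
    finally show "\<exists>D. (\<phi> has_real_derivative D) (at t) \<and> D \<le> 0"
      using D by force
  qed simp
  then show ?thesis by (simp add: \<phi>_def d_def)
qed

lemma accelerated_gradient_step_bound:
  fixes g :: "'a::real_inner \<Rightarrow> real"
  assumes g_convex: "convex_on UNIV g"
    and g_grad: "\<And>u. (g has_derivative (\<lambda>v. G u \<bullet> v)) (at u)"
    and G_lip: "\<And>u v. norm (G u - G v) \<le> L * norm (u - v)"
    and y: "y = (1 - t) *\<^sub>R x + t *\<^sub>R z" and t: "t \<le> 1"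
  shows "g ((1 - t) *\<^sub>R x + t *\<^sub>R w)
           \<le> (1 - t) * g x + t * (g y + G y \<bullet> (w - y)) + L * t\<^sup>2 / 2 * (norm (w - z))\<^sup>2"
proof -
  define x' where "x' = (1 - t) *\<^sub>R x + t *\<^sub>R w"
  have "x' - y = t *\<^sub>R (w - z)"
    by (simp add: x'_def y algebra_simps)
  then have "g x' \<le> g y + G y \<bullet> (x' - y) + L * t\<^sup>2 / 2 * (norm (w - z))\<^sup>2"
    using lipschitz_gradient_upper_bound[OF g_grad G_lip, of x' y] by (simp add: power_mult_distrib)
  also have "G y \<bullet> (x' - y) = (1 - t) * (G y \<bullet> (x - y)) + t * (G y \<bullet> (w - y))"
    by (simp add: x'_def algebra_simps inner_diff_right inner_add_right)
  finally show ?thesis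
    using mult_left_mono[OF convex_gradient_inequality[OF g_convex g_grad, of y x], of "1 - t"] t
    by (simp add: x'_def algebra_simps)
qed

lemma theta_update:
  fixes t s :: real
  assumes t: "0 < t" and s: "s = (- (t\<^sup>2) + sqrt (t ^ 4 + 4 * t\<^sup>2)) / 2"
  shows "0 < s" "s < 1" "s\<^sup>2 = (1 - s) * t\<^sup>2"
proof -
  have "(t\<^sup>2)\<^sup>2 < t ^ 4 + 4 * t\<^sup>2"
    using t by (simp add: power_mult [symmetric])
  then show "0 < s"
    using s real_less_rsqrt by fastforce
  have "sqrt (t ^ 4 + 4 * t\<^sup>2) < sqrt ((2 + t\<^sup>2)\<^sup>2)"
    by (intro real_sqrt_less_mono) (simp add: power2_eq_square algebra_simps power4_eq_xxxx)
  then show "s < 1"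
    using s by simp
  have "2 * s + t\<^sup>2 = sqrt (t ^ 4 + 4 * t\<^sup>2)"
    using s by simp
  then have "(2 * s + t\<^sup>2)\<^sup>2 = t ^ 4 + 4 * t\<^sup>2"
    by simp
  then show "s\<^sup>2 = (1 - s) * t\<^sup>2"
    by (simp add: power2_eq_square power4_eq_xxxx algebra_simps)
qed

text \<open>Writing the update as \<open>1/s\<^sup>2 - 1/s = 1/t\<^sup>2\<close> gives \<open>(1/s - 1/2)\<^sup>2 = 1/t\<^sup>2 + 1/4\<close>.\<close>

lemma inverse_theta_update_ge:
  fixes t s :: real
  assumes "0 < t" "0 < s" "s < 1" "s\<^sup>2 = (1 - s) * t\<^sup>2"
  shows "1 / t + 1 / 2 \<le> 1 / s"
proof -
  have "(1 / s - 1 / 2)\<^sup>2 = (1 / t)\<^sup>2 + 1 / 4"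
    using assms by (simp add: field_simps power2_eq_square)
  then have "(1 / t)\<^sup>2 \<le> (1 / s - 1 / 2)\<^sup>2"
    by simp
  moreover have "0 \<le> 1 / s - 1 / 2"
    using assms by (simp add: field_simps)
  ultimately show ?thesis
    using power2_le_imp_le by fastforce
qed

lemma subdiff_nonempty_imp_finite:
  assumes "s \<in> subdiff f x" and "f y \<noteq> \<infinity>"
  shows "f x \<noteq> \<infinity>"
  using assms unfolding subdiff_def by force

lemma proper_convex_fun_combination:
  assumes "proper_fun h" "convex_fun h" "h a \<noteq> \<infinity>" "h c \<noteq> \<infinity>" "0 \<le> t" "t \<le> 1"
  shows "h ((1 - t) *\<^sub>R a + t *\<^sub>R c)
           \<le> ereal ((1 - t) * real_of_ereal (h a) + t * real_of_ereal (h c))"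
proof -
  have "h a \<noteq> -\<infinity>" "h c \<noteq> -\<infinity>"
    using assms(1) unfolding proper_fun_def by blast+
  then have "ereal (1 - t) * h a + ereal t * h c
      = ereal ((1 - t) * real_of_ereal (h a) + t * real_of_ereal (h c))"
    using assms(3,4) by (cases "h a"; cases "h c") auto
  then show ?thesis
    using assms(2-6) unfolding convex_fun_def by metis
qed

lemma proper_convex_fun_dom:
  assumes "proper_fun h" "convex_fun h"
  shows "convex {w. h w \<noteq> \<infinity>}" "convex_on {w. h w \<noteq> \<infinity>} (\<lambda>w. real_of_ereal (h w))"
proof -
  have comb: "h ((1 - t) *\<^sub>R a + t *\<^sub>R c) \<noteq> \<infinity> \<and>
      real_of_ereal (h ((1 - t) *\<^sub>R a + t *\<^sub>R c)) \<le> (1 - t) * real_of_ereal (h a) + t * real_of_ereal (h c)"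
    if "h a \<noteq> \<infinity>" "h c \<noteq> \<infinity>" "0 \<le> t" "t \<le> 1" for a c t
  proof -
    note le = proper_convex_fun_combination[OF assms that]
    moreover have "h ((1 - t) *\<^sub>R a + t *\<^sub>R c) \<noteq> -\<infinity>"
      using assms(1) unfolding proper_fun_def by blast
    ultimately show ?thesis
      by (cases "h ((1 - t) *\<^sub>R a + t *\<^sub>R c)") auto
  qed
  then show "convex {w. h w \<noteq> \<infinity>}"
    unfolding convex_alt by blast
  then show "convex_on {w. h w \<noteq> \<infinity>} (\<lambda>w. real_of_ereal (h w))"
    using comb by (intro convex_onI) auto
qed

lemma linear_imp_convex_on:
  assumes "linear l" "convex S"
  shows "convex_on S l"
  using assms by (intro convex_onI) (simp_all add: linear_add linear_scale)

text \<open>Comparing \<open>z\<close> with the points \<open>z + t (u - z)\<close> and letting \<open>t \<rightarrow> 0\<^sup>+\<close> gives the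
  first-order condition \<open>0 \<le> F u - F z + c\<close>; the quadratic coefficient \<open>q\<close> is then left over.\<close>

lemma convex_plus_quadratic_minimiser_gap:
  fixes F Q :: "'a::real_vector \<Rightarrow> real"
  assumes S: "convex S" and F: "convex_on S F" and z: "z \<in> S" and u: "u \<in> S"
    and min: "\<And>w. w \<in> S \<Longrightarrow> F z + Q z \<le> F w + Q w"
    and quad: "\<And>t. Q (z + t *\<^sub>R (u - z)) = Q z + t * c + t\<^sup>2 * q"
  shows "F z + Q z + q \<le> F u + Q u"
proof -
  have "0 \<le> F u - F z + c + t * q" if t: "0 < t" "t < 1" for t
  proof -
    have w: "z + t *\<^sub>R (u - z) = (1 - t) *\<^sub>R z + t *\<^sub>R u"
      by (simp add: algebra_simps)
    have "(1 - t) *\<^sub>R z + t *\<^sub>R u \<in> S"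
      using S z u t unfolding convex_alt by simp
    then have "F z + Q z \<le> (1 - t) * F z + t * F u + Q (z + t *\<^sub>R (u - z))"
      using min convex_onD[OF F, of t z u] z u t unfolding w by fastforce
    then have "0 \<le> t * (F u - F z + c + t * q)"
      unfolding quad by (simp add: algebra_simps power2_eq_square)
    then show ?thesis
      using t by (simp add: zero_le_mult_iff)
  qed
  then have "0 \<le> F u - F z + c"
    by (intro tendsto_lowerbound[of "\<lambda>t. F u - F z + c + t * q" _ "at_right 0"])
       (auto intro!: tendsto_eq_intros eventually_mono[OF eventually_at_right_real[of 0 1]])
  moreover have "Q u = Q z + c + q"
    using quad[of 1] by simp
  ultimately show ?thesis
    by linarith
qed

lemma norm_add_scaleR_square:
  fixes v w :: "'a::real_inner"
  shows "(norm (v + t *\<^sub>R w))\<^sup>2 = (norm v)\<^sup>2 + 2 * t * (v \<bullet> w) + t\<^sup>2 * (norm w)\<^sup>2"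
  unfolding power2_norm_eq_inner
  by (simp add: inner_add inner_scaleR inner_commute algebra_simps power2_eq_square)

lemma norm_square_convex_combination:
  fixes a c :: "'a::real_inner"
  assumes "0 \<le> t" "t \<le> 1"
  shows "(norm ((1 - t) *\<^sub>R a + t *\<^sub>R c))\<^sup>2 \<le> (1 - t) * (norm a)\<^sup>2 + t * (norm c)\<^sup>2"
proof -
  have "(1 - t) * (norm a)\<^sup>2 + t * (norm c)\<^sup>2 - (norm ((1 - t) *\<^sub>R a + t *\<^sub>R c))\<^sup>2
        = t * (1 - t) * (norm (a - c))\<^sup>2"
    unfolding power2_norm_eq_inner
    by (simp add: inner_add inner_diff inner_scaleR inner_commute algebra_simps power2_eq_square)
  then show ?thesis
    using assms by (smt (verit) mult_nonneg_nonneg zero_le_power2)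
qed

locale fast_palm =
  fixes g :: "'a::real_inner \<Rightarrow> real" and G :: "'a \<Rightarrow> 'a" and L :: real
    and h :: "'a \<Rightarrow> ereal" and A :: "'a \<Rightarrow> 'b::real_inner" and b :: 'b
    and x z :: "nat \<Rightarrow> 'a" and lam :: "nat \<Rightarrow> 'b" and theta beta :: "nat \<Rightarrow> real"
  assumes g_convex: "convex_on UNIV g"
    and g_grad: "\<And>u. (g has_derivative (\<lambda>v. G u \<bullet> v)) (at u)"
    and L_pos: "L > 0"
    and G_lip: "\<And>u v. norm (G u - G v) \<le> L * norm (u - v)"
    and h_proper: "proper_fun h" and h_convex: "convex_fun h"
    and A_lin: "linear A"
    and theta0: "theta 0 = 1"
    and theta_rec: "\<And>k. theta (Suc k) =
          (- ((theta k)\<^sup>2) + sqrt ((theta k) ^ 4 + 4 * (theta k)\<^sup>2)) / 2"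
    and beta0: "beta 0 = 1"
    and beta_rec: "\<And>k. beta (Suc k) = 1 / theta (Suc k)"
    and z_step: "\<And>k u.
          let y = (1 - theta k) *\<^sub>R x k + theta k *\<^sub>R z k;
              obj = (\<lambda>w. ereal (G y \<bullet> w) + h w + ereal (lam k \<bullet> A w)
                       + ereal (beta k / 2 * (norm (A w - b))\<^sup>2)
                       + ereal (L * theta k / 2 * (norm (w - z k))\<^sup>2))
          in obj (z (Suc k)) \<le> obj u"
    and x_step: "\<And>k. x (Suc k) = (1 - theta k) *\<^sub>R x k + theta k *\<^sub>R z (Suc k)"
    and lam_step: "\<And>k. lam (Suc k) = lam k + beta k *\<^sub>R (A (z (Suc k)) - b)"
begin

lemma theta_pos_le_one: "0 < theta k \<and> theta k \<le> 1"
proof (induction k)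
  case (Suc k)
  then show ?case
    using theta_update(1,2)[OF _ theta_rec[of k]] by fastforce
qed (simp add: theta0)

lemma theta_Suc_square: "(theta (Suc k))\<^sup>2 = (1 - theta (Suc k)) * (theta k)\<^sup>2"
  using theta_update(3)[OF _ theta_rec[of k]] theta_pos_le_one by blast

lemma inverse_theta_ge: "real k / 2 + 1 \<le> 1 / theta k"
proof (induction k)
  case (Suc k)
  have "1 / theta k + 1 / 2 \<le> 1 / theta (Suc k)"
    using inverse_theta_update_ge[OF _ theta_update[OF _ theta_rec[of k]]] theta_pos_le_one by blast
  with Suc.IH show ?case
    by (simp add: field_simps)
qed (simp add: theta0)

lemma theta_le: "theta k \<le> 2 / (real k + 2)"
proof -
  have "1 / (1 / theta k) \<le> 1 / (real k / 2 + 1)"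
    using inverse_theta_ge theta_pos_le_one by (intro divide_left_mono) auto
  then show ?thesis
    using theta_pos_le_one[of k] by (simp add: field_simps)
qed

lemma beta_eq: "beta k = 1 / theta k"
  by (cases k) (simp_all add: beta0 theta0 beta_rec)

text \<open>\<open>H\<close> is junk outside the effective domain of \<open>h\<close>; the only such use is \<open>H (x 0)\<close>, which
  enters with the factor \<open>1 - theta 0 = 0\<close>.\<close>

definition H :: "'a \<Rightarrow> real" where
  "H w = real_of_ereal (h w)"

lemma h_eq_H: "h w \<noteq> \<infinity> \<Longrightarrow> h w = ereal (H w)"
  using h_proper unfolding proper_fun_def H_def by (cases "h w") auto

lemma convex_dom_h: "convex {w. h w \<noteq> \<infinity>}"
  and convex_on_H: "convex_on {w. h w \<noteq> \<infinity>} H"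
  using proper_convex_fun_dom[OF h_proper h_convex] unfolding H_def[abs_def] by auto

definition y :: "nat \<Rightarrow> 'a" where
  "y k = (1 - theta k) *\<^sub>R x k + theta k *\<^sub>R z k"

definition prox_obj :: "nat \<Rightarrow> 'a \<Rightarrow> real" where
  "prox_obj k w = G (y k) \<bullet> w + H w + lam k \<bullet> A w + beta k / 2 * (norm (A w - b))\<^sup>2
                    + L * theta k / 2 * (norm (w - z k))\<^sup>2"

lemma h_z_Suc_finite: "h (z (Suc k)) \<noteq> \<infinity>"
proof
  obtain w where "h w \<noteq> \<infinity>"
    using h_proper unfolding proper_fun_def by blast
  moreover assume "h (z (Suc k)) = \<infinity>"
  ultimately show False
    using z_step[of k w] h_eq_H by (simp add: Let_def)
qed

lemma z_Suc_minimises: "h u \<noteq> \<infinity> \<Longrightarrow> prox_obj k (z (Suc k)) \<le> prox_obj k u"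
  using z_step[of k u] h_eq_H[of u] h_eq_H[OF h_z_Suc_finite[of k]]
  by (simp add: Let_def prox_obj_def y_def)

lemma prox_three_point:
  assumes u: "h u \<noteq> \<infinity>"
  shows "prox_obj k (z (Suc k)) + beta k / 2 * (norm (A (u - z (Suc k))))\<^sup>2
           + L * theta k / 2 * (norm (u - z (Suc k)))\<^sup>2 \<le> prox_obj k u"
proof -
  define z' where "z' = z (Suc k)"
  define F where "F w = H w + (G (y k) \<bullet> w + lam k \<bullet> A w)" for w
  define Q where "Q w = beta k / 2 * (norm (A w - b))\<^sup>2 + L * theta k / 2 * (norm (w - z k))\<^sup>2" for w
  have obj: "prox_obj k w = F w + Q w" for w
    by (simp add: prox_obj_def F_def Q_def)
  have "linear (\<lambda>w. G (y k) \<bullet> w + lam k \<bullet> A w)"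
    using A_lin by (intro linearI) (simp_all add: linear_add linear_scale inner_add_right algebra_simps)
  then have F_convex: "convex_on {w. h w \<noteq> \<infinity>} F"
    unfolding F_def by (intro convex_on_add convex_on_H linear_imp_convex_on convex_dom_h)
  have "A (z' + t *\<^sub>R (u - z')) - b = (A z' - b) + t *\<^sub>R A (u - z')" for t
    using A_lin by (simp add: linear_add linear_scale)
  moreover have "z' + t *\<^sub>R (u - z') - z k = (z' - z k) + t *\<^sub>R (u - z')" for t
    by simp
  ultimately have "Q (z' + t *\<^sub>R (u - z')) = Q z'
      + t * (beta k * ((A z' - b) \<bullet> A (u - z')) + L * theta k * ((z' - z k) \<bullet> (u - z')))
      + t\<^sup>2 * (beta k / 2 * (norm (A (u - z')))\<^sup>2 + L * theta k / 2 * (norm (u - z'))\<^sup>2)" for t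
    unfolding Q_def by (simp only: norm_add_scaleR_square) (simp add: algebra_simps)
  from convex_plus_quadratic_minimiser_gap[OF convex_dom_h F_convex _ _ _ this]
  show ?thesis
    using u h_z_Suc_finite[of k] z_Suc_minimises[of _ k] unfolding obj z'_def by (simp add: add.assoc)
qed

lemma h_x_Suc_finite: "h (x (Suc k)) \<noteq> \<infinity>"
proof (induction k)
  case 0
  then show ?case
    using h_z_Suc_finite x_step[of 0] by (simp add: theta0)
next
  case (Suc k)
  then show ?case
    using convex_dom_h h_z_Suc_finite theta_pos_le_one[of "Suc k"]
    unfolding x_step[of "Suc k"] convex_alt by simp
qed

lemma H_x_Suc_le: "H (x (Suc k)) \<le> (1 - theta k) * H (x k) + theta k * H (z (Suc k))"
proof (cases k)
  case 0
  then show ?thesis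
    using x_step[of 0] by (simp add: theta0)
next
  case (Suc j)
  then show ?thesis
    using convex_onD[OF convex_on_H] h_x_Suc_finite[of j] h_z_Suc_finite[of k] theta_pos_le_one[of k]
    unfolding x_step[of k] by simp
qed

definition lagrangian_gap :: "'a \<Rightarrow> 'b \<Rightarrow> nat \<Rightarrow> real" where
  "lagrangian_gap xs lams k = g (x k) + H (x k) - (g xs + H xs) + lams \<bullet> (A (x k) - b)
                               + 1 / 2 * (norm (A (x k) - b))\<^sup>2"

definition potential :: "'a \<Rightarrow> 'b \<Rightarrow> nat \<Rightarrow> real" where
  "potential xs lams k = L * (norm (z k - xs))\<^sup>2 + (norm (lam k - lams))\<^sup>2"

lemma lagrangian_gap_Suc_le_linearised:
  "lagrangian_gap xs lams (Suc k) \<le> (1 - theta k) * lagrangian_gap xs lams k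
     + theta k * (G (y k) \<bullet> (z (Suc k) - xs) + H (z (Suc k)) - H xs + lams \<bullet> (A (z (Suc k)) - b)
                  + (norm (A (z (Suc k)) - b))\<^sup>2 / 2)
     + L * (theta k)\<^sup>2 / 2 * (norm (z (Suc k) - z k))\<^sup>2"
proof -
  define t where "t = theta k"
  define r where "r = A (z (Suc k)) - b"
  have t: "0 < t" "t \<le> 1"
    using theta_pos_le_one[of k] by (auto simp: t_def)
  have "t * (g (y k) + G (y k) \<bullet> (xs - y k)) \<le> t * g xs"
    using convex_gradient_inequality[OF g_convex g_grad] t by (intro mult_left_mono) auto
  then have smooth: "g (x (Suc k)) \<le> (1 - t) * g (x k) + t * g xs + t * (G (y k) \<bullet> (z (Suc k) - xs))
      + L * t\<^sup>2 / 2 * (norm (z (Suc k) - z k))\<^sup>2"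
    using accelerated_gradient_step_bound[OF g_convex g_grad G_lip y_def t(2)[unfolded t_def],
        of "z (Suc k)", folded x_step t_def]
    by (simp add: inner_diff_right algebra_simps)
  have nonsmooth: "H (x (Suc k)) \<le> (1 - t) * H (x k) + t * H (z (Suc k))"
    unfolding t_def by (rule H_x_Suc_le)
  have residual: "A (x (Suc k)) - b = (1 - t) *\<^sub>R (A (x k) - b) + t *\<^sub>R r"
    unfolding x_step t_def r_def linear_add[OF A_lin] linear_scale[OF A_lin] by (simp add: algebra_simps)
  have multiplier: "lams \<bullet> (A (x (Suc k)) - b) = (1 - t) * (lams \<bullet> (A (x k) - b)) + t * (lams \<bullet> r)"
    unfolding residual by (simp add: inner_add_right)
  have penalty: "(norm (A (x (Suc k)) - b))\<^sup>2 \<le> (1 - t) * (norm (A (x k) - b))\<^sup>2 + t * (norm r)\<^sup>2"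
    unfolding residual using t by (intro norm_square_convex_combination) auto
  show ?thesis
    using smooth nonsmooth multiplier penalty
    unfolding lagrangian_gap_def t_def[symmetric] r_def[symmetric]
    by (simp add: field_simps)
qed

lemma lagrangian_gap_Suc_le:
  assumes feasible: "A xs = b" and finite: "h xs \<noteq> \<infinity>"
  shows "lagrangian_gap xs lams (Suc k) \<le> (1 - theta k) * lagrangian_gap xs lams k
           + (theta k)\<^sup>2 / 2 * (potential xs lams k - potential xs lams (Suc k))"
proof -
  define t where "t = theta k"
  define r where "r = A (z (Suc k)) - b"
  have t: "0 < t" "t \<le> 1"
    using theta_pos_le_one[of k] by (auto simp: t_def)
  have "norm (A (xs - z (Suc k))) = norm r"
    using feasible by (simp add: linear_diff[OF A_lin] r_def norm_minus_commute)
  then have prox: "G (y k) \<bullet> (z (Suc k) - xs) + H (z (Suc k)) - H xs + lam k \<bullet> r + (norm r)\<^sup>2 / t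
      + L * t / 2 * ((norm (z (Suc k) - z k))\<^sup>2 + (norm (z (Suc k) - xs))\<^sup>2)
      \<le> L * t / 2 * (norm (z k - xs))\<^sup>2" (is "?l \<le> ?r")
    using prox_three_point[OF finite, of k] unfolding prox_obj_def feasible
    by (simp add: t_def r_def beta_eq norm_minus_commute inner_diff_right algebra_simps)
  have prox_scaled: "t * (G (y k) \<bullet> (z (Suc k) - xs)) + t * H (z (Suc k)) - t * H xs + t * (lam k \<bullet> r)
      + (norm r)\<^sup>2 + L * t\<^sup>2 / 2 * ((norm (z (Suc k) - z k))\<^sup>2 + (norm (z (Suc k) - xs))\<^sup>2)
      \<le> L * t\<^sup>2 / 2 * (norm (z k - xs))\<^sup>2" (is "?lt \<le> ?rt")
  proof -
    have scaled: "?lt = t * ?l" "?rt = t * ?r"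
      using t by (simp_all add: field_simps power2_eq_square)
    show ?thesis
      unfolding scaled by (rule mult_left_mono[OF prox]) (use t in simp)
  qed
  have lam_diff: "lam (Suc k) - lams = (lam k - lams) + (1 / t) *\<^sub>R r"
    by (simp add: lam_step r_def beta_eq t_def)
  have dual: "t\<^sup>2 / 2 * (norm (lam (Suc k) - lams))\<^sup>2
      = t\<^sup>2 / 2 * (norm (lam k - lams))\<^sup>2 + t * (lam k \<bullet> r) - t * (lams \<bullet> r) + (norm r)\<^sup>2 / 2"
    unfolding lam_diff norm_add_scaleR_square
    using t by (simp add: inner_diff_left field_simps power2_eq_square)
  have "t * (norm r)\<^sup>2 \<le> (norm r)\<^sup>2"
    using t by (simp add: mult_left_le_one_le)
  then show ?thesis
    using lagrangian_gap_Suc_le_linearised[of xs lams k] prox_scaled dual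
    unfolding potential_def t_def[symmetric] r_def[symmetric]
    by (simp add: field_simps)
qed

lemma lagrangian_gap_Lyapunov:
  assumes "A xs = b" and "h xs \<noteq> \<infinity>"
  shows "lagrangian_gap xs lams (Suc k) / (theta k)\<^sup>2 + potential xs lams (Suc k) / 2
           \<le> potential xs lams 0 / 2"
proof (induction k)
  case 0
  then show ?case
    using lagrangian_gap_Suc_le[OF assms, of lams 0] by (simp add: theta0)
next
  case (Suc k)
  define t where "t = theta (Suc k)"
  have t: "0 < t" and "0 < theta k"
    using theta_pos_le_one by (auto simp: t_def)
  have weight: "(1 - t) / t\<^sup>2 = 1 / (theta k)\<^sup>2"
    using theta_Suc_square[of k] t \<open>0 < theta k\<close> by (simp add: t_def field_simps)
  have "lagrangian_gap xs lams (Suc (Suc k)) / t\<^sup>2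
      \<le> ((1 - t) * lagrangian_gap xs lams (Suc k)
          + t\<^sup>2 / 2 * (potential xs lams (Suc k) - potential xs lams (Suc (Suc k)))) / t\<^sup>2"
    using lagrangian_gap_Suc_le[OF assms, of lams "Suc k"] by (simp add: t_def divide_right_mono)
  also have "\<dots> = lagrangian_gap xs lams (Suc k) * ((1 - t) / t\<^sup>2)
      + (potential xs lams (Suc k) - potential xs lams (Suc (Suc k))) / 2"
    using t by (simp add: field_simps)
  also have "\<dots> = lagrangian_gap xs lams (Suc k) / (theta k)\<^sup>2
      + (potential xs lams (Suc k) - potential xs lams (Suc (Suc k))) / 2"
    unfolding weight by simp
  finally show ?case
    using Suc.IH unfolding t_def diff_divide_distrib by linarith
qed

lemma lagrangian_gap_bound:
  assumes "A xs = b" and "h xs \<noteq> \<infinity>"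
  shows "lagrangian_gap xs lams (Suc k) \<le> 2 / (real k + 2)\<^sup>2 * potential xs lams 0"
proof -
  have potential_nonneg: "0 \<le> potential xs lams j" for j
    using L_pos by (simp add: potential_def)
  have "lagrangian_gap xs lams (Suc k) / (theta k)\<^sup>2 \<le> potential xs lams 0 / 2"
    using lagrangian_gap_Lyapunov[OF assms, of lams k] potential_nonneg[of "Suc k"] by linarith
  then have "lagrangian_gap xs lams (Suc k) \<le> (theta k)\<^sup>2 * (potential xs lams 0 / 2)"
    using theta_pos_le_one[of k] by (simp add: divide_le_eq mult.commute)
  also have "\<dots> \<le> (2 / (real k + 2))\<^sup>2 * (potential xs lams 0 / 2)"
    using theta_pos_le_one[of k] theta_le[of k] potential_nonneg
    by (intro mult_right_mono power_mono) auto
  finally show ?thesis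
    by (simp add: power_divide)
qed

end

theorem theorem1:
  fixes g :: "'a::euclidean_space \<Rightarrow> real" and h :: "'a \<Rightarrow> ereal"
    and G :: "'a \<Rightarrow> 'a" and L :: real
    and A :: "'a \<Rightarrow> 'b::euclidean_space" and b :: 'b
    and xs :: 'a and lams :: 'b
    and x z :: "nat \<Rightarrow> 'a" and lam :: "nat \<Rightarrow> 'b"
    and theta beta :: "nat \<Rightarrow> real" and K :: nat
  defines "f \<equiv> (\<lambda>u. ereal (g u) + h u)"
  assumes g_convex: "convex_on UNIV g"
    and g_grad: "\<And>u. (g has_derivative (\<lambda>v. G u \<bullet> v)) (at u)"
    and L_pos: "L > 0"
    and G_lip: "\<And>u v. norm (G u - G v) \<le> L * norm (u - v)"
    and h_proper: "proper_fun h" and h_convex: "convex_fun h" and h_lsc: "lsc_fun h"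
    and A_lin: "linear A"
    and saddle_feas: "A xs = b"
    and saddle_sub: "- adjoint A lams \<in> subdiff f xs"
    and theta0: "theta 0 = 1"
    and theta_rec: "\<And>k. theta (Suc k) =
          (- ((theta k)^2) + sqrt ((theta k)^4 + 4 * (theta k)^2)) / 2"
    and beta0: "beta 0 = 1"
    and beta_rec: "\<And>k. beta (Suc k) = 1 / theta (Suc k)"
    and z_step: "\<And>k u.
          let y = (1 - theta k) *\<^sub>R x k + theta k *\<^sub>R z k;
              obj = (\<lambda>w. ereal (G y \<bullet> w) + h w + ereal (lam k \<bullet> A w)
                       + ereal (beta k / 2 * (norm (A w - b))^2)
                       + ereal (L * theta k / 2 * (norm (w - z k))^2))
          in obj (z (Suc k)) \<le> obj u"
    and x_step: "\<And>k. x (Suc k) = (1 - theta k) *\<^sub>R x k + theta k *\<^sub>R z (Suc k)"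
    and lam_step: "\<And>k. lam (Suc k) = lam k + beta k *\<^sub>R (A (z (Suc k)) - b)"
    and K_pos: "K > 0"
  shows "f (x (Suc K)) - f xs + ereal (lams \<bullet> (A (x (Suc K)) - b))
           + ereal (1/2 * (norm (A (x (Suc K)) - b))^2)
         \<le> ereal (2 / (real K + 2)^2 * (L * (norm (z 0 - xs))^2 + (norm (lam 0 - lams))^2))"
proof -
  interpret fast_palm g G L h A b x z lam theta beta
    by (rule fast_palm.intro) (fact g_convex g_grad L_pos G_lip h_proper h_convex A_lin theta0
        theta_rec beta0 beta_rec z_step x_step lam_step)+
  obtain w where "h w \<noteq> \<infinity>"
    using h_proper unfolding proper_fun_def by blast
  then have "f xs \<noteq> \<infinity>"
    using subdiff_nonempty_imp_finite[OF saddle_sub, of w] by (simp add: f_def)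
  then have h_xs: "h xs \<noteq> \<infinity>"
    by (simp add: f_def)
  have f_eq: "f u = ereal (g u + H u)" if "h u \<noteq> \<infinity>" for u
    using h_eq_H[OF that] by (simp add: f_def)
  show ?thesis
    using lagrangian_gap_bound[OF saddle_feas h_xs, of lams K]
    unfolding f_eq[OF h_xs] f_eq[OF h_x_Suc_finite] lagrangian_gap_def potential_def
    by simp
qed

end
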